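(* For every $M>0$ there exists a function $\phi:\mathbb{R}^2\to\mathbb{R}$ generated by a $\sigma$-activated network with width $9$ and depth $2$ such that $\phi(x,y)=xy$ for all $x,y\in[-M,M]$.
   Context: Let $\sigma_1:\mathbb{R}\to\mathbb{R}$ be the continuous triangular-wave function of period $2$: $\sigma_1(x)=|x|$ for $x\in[-1,1]$, $\sigma_1(x+2)=\sigma_1(x)$. The activation is $\sigma(x)=\sigma_1(x)$ for $x\ge0$ and $\sigma(x)=x/(|x|+1)$ for $x<0$, applied entrywise. A function generated by a $\sigma$-activated network with input dimension $n$, width $N$ and depth $L$ is a function of the form $\mathcal{L}_{\ell}\circ\sigma\circ\mathcal{L}_{\ell-1}\circ\cdots\circ\sigma\circ\mathcal{L}_0$ with $\ell\le L$ hidden layers, affine maps $\mathcal{L}_i$, $\mathcal{L}_0$ with domain $\mathbb{R}^n$, $\mathcal{L}_\ell$ with codomain $\mathbb{R}$, and at most $N$ neurons in each hidden layer. *)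

theory Defs
  imports "HOL-Analysis.Analysis"
begin

(* triangular wave of period 2: |x| on [-1,1], extended 2-periodically *)
definition sigma1 :: "real \<Rightarrow> real" where
  "sigma1 x = \<bar>x - 2 * real_of_int \<lfloor>(x + 1) / 2\<rfloor>\<bar>"

definition sigma :: "real \<Rightarrow> real" where
  "sigma x = (if x \<ge> 0 then sigma1 x else x / (\<bar>x\<bar> + 1))"

(* affine map R^a -> R^b, vectors represented as lists of length a resp. b *)
definition affine :: "nat \<Rightarrow> nat \<Rightarrow> (nat \<Rightarrow> nat \<Rightarrow> real) \<Rightarrow> (nat \<Rightarrow> real)
    \<Rightarrow> real list \<Rightarrow> real list" where
  "affine a b W c = (\<lambda>x. map (\<lambda>i. (\<Sum>j<a. W i j * x ! j) + c i) [0..<b])"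

(* hidden_map n ds g: g = sigma o L_{l-1} o ... o sigma o L_0 where L_0 : R^n -> R^(ds!0),
   L_k : R^(ds!(k-1)) -> R^(ds!k); l = length ds hidden layers, sigma entrywise *)
inductive hidden_map :: "nat \<Rightarrow> nat list \<Rightarrow> (real list \<Rightarrow> real list) \<Rightarrow> bool" where
  input: "hidden_map n [] (\<lambda>x. x)"
| layer: "hidden_map n ds g \<Longrightarrow> a = last (n # ds) \<Longrightarrow>
          hidden_map n (ds @ [b]) (\<lambda>x. map sigma (affine a b W c (g x)))"

(* functions R^n -> R (inputs as lists of length n) generated by a sigma-activated network
   of width N (at most N neurons per hidden layer) and depth L (at most L hidden layers) *)
definition sigma_net :: "nat \<Rightarrow> nat \<Rightarrow> nat \<Rightarrow> (real list \<Rightarrow> real) \<Rightarrow> bool" where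
  "sigma_net n N L f \<longleftrightarrow>
     (\<exists>ds g W c. hidden_map n ds g \<and> length ds \<le> L \<and> (\<forall>d\<in>set ds. d \<le> N) \<and>
        (\<forall>x. length x = n \<longrightarrow> f x = hd (affine (last (n # ds)) 1 W c (g x))))"

end

theory Submission
  imports Defs
begin

text \<open>On the negative half-line \<open>\<sigma>(t) = t/(1 - t)\<close> is a linear fractional map, so for \<open>a > 1\<close>
  the difference \<open>\<sigma>(1 - a) - \<sigma>(-a) = 1/a - 1/(a + 1) = 1/(a(a + 1))\<close>, and one further
  neuron \<open>\<sigma>(1 - b/p) = p/b - 1\<close> (for \<open>0 < p < b\<close>) inverts this reciprocal. Hence two
  hidden layers compute \<open>q(a) = a(a + 1)\<close> up to an affine change, exactly, as long as
  \<open>a > 1\<close> and \<open>q(a) < b\<close>. Shifting by a constant \<open>c\<close> makes \<open>a = c + s\<close> exceed 1 for all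
  relevant \<open>s\<close>, and the polarization identity
  \<open>q(c + x + y) + q(c - x - y) - q(c + x - y) - q(c - x + y) = 8xy\<close>
  recovers the product from four such gadgets, with 8 + 4 neurons.\<close>

lemma sigma_neg: "t < 0 \<Longrightarrow> sigma t = t / (1 - t)"
  by (simp add: sigma_def)

lemma sigma_diff_eq_reciprocal:
  fixes a :: real
  assumes "a > 1"
  shows "sigma (1 - a) - sigma (- a) = 1 / (a * (a + 1))"
  using assms by (simp add: sigma_neg field_simps)

lemma sigma_one_minus_divide:
  fixes p b :: real
  assumes "0 < p" "p < b"
  shows "sigma (1 - b / p) = p / b - 1"
proof -
  have "1 - b / p < 0"
    using assms by (simp add: field_simps)
  then show ?thesis
    using assms by (simp add: sigma_neg field_simps)
qed

lemma sigma_square_gadget: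
  fixes a b :: real
  assumes "a > 1" "a * (a + 1) < b"
  shows "sigma (1 - b * (sigma (1 - a) - sigma (- a))) = a * (a + 1) / b - 1"
  using sigma_one_minus_divide[of "a * (a + 1)" b] assms
  by (simp add: sigma_diff_eq_reciprocal)

lemma polarization_shifted:
  fixes c x y :: real
  shows "(c + (x + y)) * (c + (x + y) + 1) + (c - (x + y)) * (c - (x + y) + 1)
       - (c + (x - y)) * (c + (x - y) + 1) - (c - (x - y)) * (c - (x - y) + 1) = 8 * x * y"
  by (simp add: algebra_simps)

lemma sigma_net_two_hidden_layers:
  assumes "d\<^sub>1 \<le> N" "d\<^sub>2 \<le> N"
  shows "sigma_net n N 2 (\<lambda>x. hd (affine d\<^sub>2 1 W\<^sub>3 c\<^sub>3
           (map sigma (affine d\<^sub>1 d\<^sub>2 W\<^sub>2 c\<^sub>2 (map sigma (affine n d\<^sub>1 W\<^sub>1 c\<^sub>1 x))))))"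
proof -
  have "hidden_map n [d\<^sub>1] (\<lambda>x. map sigma (affine n d\<^sub>1 W\<^sub>1 c\<^sub>1 x))"
    using hidden_map.layer[OF hidden_map.input, of n n d\<^sub>1 W\<^sub>1 c\<^sub>1] by simp
  from hidden_map.layer[OF this, of d\<^sub>1 d\<^sub>2 W\<^sub>2 c\<^sub>2]
  have "hidden_map n [d\<^sub>1, d\<^sub>2]
          (\<lambda>x. map sigma (affine d\<^sub>1 d\<^sub>2 W\<^sub>2 c\<^sub>2 (map sigma (affine n d\<^sub>1 W\<^sub>1 c\<^sub>1 x))))"
    by simp
  then show ?thesis
    unfolding sigma_net_def using assms by (intro exI[of _ "[d\<^sub>1, d\<^sub>2]"]) auto
qed

text \<open>Hidden neurons \<open>2k\<close> and \<open>2k + 1\<close> of the first layer receive \<open>1 - a\<^sub>k\<close> and \<open>-a\<^sub>k\<close>,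
  where \<open>a\<^sub>k = c + s\<^sub>k\<close> and \<open>s\<^sub>k\<close> runs through \<open>x + y, -(x + y), x - y, y - x\<close>; neuron \<open>k\<close>
  of the second layer is the square gadget for \<open>a\<^sub>k\<close>.\<close>

definition product_net :: "real \<Rightarrow> real \<Rightarrow> real list \<Rightarrow> real" where
  "product_net c b = (\<lambda>v. hd (affine 4 1 (\<lambda>i j. [[b/8, b/8, -b/8, -b/8]] ! i ! j) (\<lambda>_. 0)
     (map sigma (affine 8 4
        (\<lambda>i j. [[-b, b, 0, 0, 0, 0, 0, 0], [0, 0, -b, b, 0, 0, 0, 0],
                [0, 0, 0, 0, -b, b, 0, 0], [0, 0, 0, 0, 0, 0, -b, b]] ! i ! j) (\<lambda>_. 1)
     (map sigma (affine 2 8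
        (\<lambda>i j. [[-1, -1], [-1, -1], [1, 1], [1, 1], [-1, 1], [-1, 1], [1, -1], [1, -1]] ! i ! j)
        (\<lambda>i. [1 - c, - c, 1 - c, - c, 1 - c, - c, 1 - c, - c] ! i) v))))))"

lemma sigma_net_product_net: "sigma_net 2 9 2 (product_net c b)"
  unfolding product_net_def by (rule sigma_net_two_hidden_layers) auto

lemma product_net_eq_mult:
  fixes c b x y :: real
  assumes gadget: "\<And>s. s \<in> {x + y, - (x + y), x - y, y - x} \<Longrightarrow>
                     c + s > 1 \<and> (c + s) * (c + s + 1) < b"
  shows "product_net c b [x, y] = x * y"
proof -
  define g where "g s = sigma (1 - b * (sigma (1 - (c + s)) - sigma (- (c + s))))" for s
  define q where "q s = (c + s) * (c + s + 1) / b - 1" for s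
  have g_eq_q: "g s = q s" if "s \<in> {x + y, - (x + y), x - y, y - x}" for s
    unfolding g_def q_def using gadget[OF that] by (intro sigma_square_gadget) auto
  have "1 < c + (x + y)" "(c + (x + y)) * (c + (x + y) + 1) < b"
    using gadget by auto
  then have "b > 0"
    using mult_pos_pos[of "c + (x + y)" "c + (x + y) + 1"] by linarith
  have "product_net c b [x, y] = b / 8 * (g (x + y) + g (- (x + y)) - g (x - y) - g (y - x))"
    by (simp add: product_net_def affine_def eval_nat_numeral upt_rec g_def algebra_simps)
  also have "\<dots> = b / 8 * (q (x + y) + q (- (x + y)) - q (x - y) - q (y - x))"
    using g_eq_q[of "x + y"] g_eq_q[of "- (x + y)"] g_eq_q[of "x - y"] g_eq_q[of "y - x"]
    by simp
  also have "\<dots> = x * y"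
    using \<open>b > 0\<close> polarization_shifted[of c x y]
    by (simp add: q_def field_simps)
  finally show ?thesis .
qed

theorem lemma16:
  fixes M :: real
  assumes "M > 0"
  shows "\<exists>\<phi>. sigma_net 2 9 2 \<phi> \<and>
           (\<forall>x y. x \<in> {-M..M} \<longrightarrow> y \<in> {-M..M} \<longrightarrow> \<phi> [x, y] = x * y)"
proof (intro exI conjI allI impI)
  define c :: real where "c = 2 * M + 2"
  define b :: real where "b = (4 * M + 3)\<^sup>2"
  show "sigma_net 2 9 2 (product_net c b)"
    by (rule sigma_net_product_net)
  fix x y
  assume "x \<in> {-M..M}" "y \<in> {-M..M}"
  show "product_net c b [x, y] = x * y"
  proof (rule product_net_eq_mult)
    fix s
    assume "s \<in> {x + y, - (x + y), x - y, y - x}"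
    then have "2 \<le> c + s" "c + s \<le> 4 * M + 2"
      using \<open>x \<in> {-M..M}\<close> \<open>y \<in> {-M..M}\<close> by (auto simp: c_def)
    moreover from this have "(c + s) * (c + s + 1) \<le> (4 * M + 2) * (4 * M + 3)"
      by (intro mult_mono) auto
    ultimately show "c + s > 1 \<and> (c + s) * (c + s + 1) < b"
      using assms by (simp add: b_def power2_eq_square algebra_simps)
  qed
qed

end
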